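(* For any $1\le q\le \mathsf n$, conditionally on $X_{q:\mathsf n}$, $(V_{\mathsf n},\dots,V_1)$ is a Markov chain. Its transition kernels $(K^{V|X}_{\pi_V,k,q})$ satisfy: for all $q\le k<\mathsf n$ there exists a measure $\mu_{k,q}$ such that for every measurable set $A$, \[K^{V|X}_{\pi_V,k,q}(V_{k+1},A)=\mathbb P_{\pi_V}(V_k\in A\mid V_{k+1:\mathsf n},X_{q:\mathsf n})=\mathbb P_{\pi_V}(V_k\in A\mid V_{k+1},X_{q:\mathsf n})\ge\nu_k\,\mu_{k,q}(A),\] while for all $1\le k<q$, \[K^{V|X}_{\pi_V,k,q}(V_{k+1},A)=\mathbb P_{\pi_V}(V_k\in A\mid V_{k+1:\mathsf n},X_{q:\mathsf n})=\pi_V(A).\]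
   Context: Let $\mathsf n\ge1$, $\pi_V$ a probability distribution on a measurable space $\mathbb V$, $\mathbb X$ a discrete set, and $K_i:\mathbb X\times\mathbb V^2\to[0,\infty)$ ($i\ge1$) such that each $K_i(\cdot,v,w)$ is a probability distribution on $\mathbb X$. $\mathbb P_{\pi_V}$ is the law on $\mathbb V^{\mathsf n+1}\times\mathbb X^{\mathsf n}$ given by $\mathbb P_{\pi_V}(V_{1:\mathsf n+1}\in A_{1:\mathsf n+1},X_{1:\mathsf n}=x_{1:\mathsf n})=\int\prod_{i=1}^{\mathsf n+1}\mathbf 1_{A_i}(v_i)\pi_V(dv_i)\prod_{i=1}^{\mathsf n}K_i(x_i,v_i,v_{i+1})$, i.e. $V_i$ i.i.d. $\pi_V$ and, given $V$, the $X_i$ independent with $\mathbb P(X_i=x\mid V)=K_i(x,V_i,V_{i+1})$. Assumption H2: there exist $\nu_i>0$ with $\nu_i\le K_i(x,v,w)\le1$ for all $x\in\mathbb X$, all $i$, all $v,w\in\mathbb V$. *)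

theory Defs
  imports "HOL-Probability.Probability"
begin

text \<open>Sample space: pairs (v, x) with v i = V_i (i = 1..n+1) and x i = X_i (i = 1..n).\<close>

definition joint_law ::
  "nat \<Rightarrow> 'v measure \<Rightarrow> (nat \<Rightarrow> 'x \<Rightarrow> 'v \<Rightarrow> 'v \<Rightarrow> real)
    \<Rightarrow> ((nat \<Rightarrow> 'v) \<times> (nat \<Rightarrow> 'x)) measure" where
  "joint_law n piV K =
     density (PiM {1..n+1} (\<lambda>_. piV) \<Otimes>\<^sub>M PiM {1..n} (\<lambda>_. count_space UNIV))
       (\<lambda>(v, x). ennreal (\<Prod>i=1..n. K i (x i) (v i) (v (Suc i))))"

definition Xobs :: "nat \<Rightarrow> nat \<Rightarrow> (nat \<Rightarrow> 'v) \<times> (nat \<Rightarrow> 'x) \<Rightarrow> (nat \<Rightarrow> 'x)" where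
  "Xobs q n \<omega> = restrict (snd \<omega>) {q..n}"

definition sig_Vtail_X ::
  "nat \<Rightarrow> 'v measure \<Rightarrow> ((nat \<Rightarrow> 'v) \<times> (nat \<Rightarrow> 'x)) measure \<Rightarrow> nat \<Rightarrow> nat
    \<Rightarrow> ((nat \<Rightarrow> 'v) \<times> (nat \<Rightarrow> 'x)) measure" where
  "sig_Vtail_X n piV M k q =
     vimage_algebra (space M) (\<lambda>\<omega>. (restrict (fst \<omega>) {Suc k..n}, Xobs q n \<omega>))
       (PiM {Suc k..n} (\<lambda>_. piV) \<Otimes>\<^sub>M PiM {q..n} (\<lambda>_. (count_space UNIV :: 'x measure)))"

definition sig_V1_X ::
  "nat \<Rightarrow> 'v measure \<Rightarrow> ((nat \<Rightarrow> 'v) \<times> (nat \<Rightarrow> 'x)) measure \<Rightarrow> nat \<Rightarrow> nat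
    \<Rightarrow> ((nat \<Rightarrow> 'v) \<times> (nat \<Rightarrow> 'x)) measure" where
  "sig_V1_X n piV M k q =
     vimage_algebra (space M) (\<lambda>\<omega>. (fst \<omega> (Suc k), Xobs q n \<omega>))
       (piV \<Otimes>\<^sub>M PiM {q..n} (\<lambda>_. (count_space UNIV :: 'x measure)))"

definition condP_V ::
  "((nat \<Rightarrow> 'v) \<times> (nat \<Rightarrow> 'x)) measure \<Rightarrow> ((nat \<Rightarrow> 'v) \<times> (nat \<Rightarrow> 'x)) measure
    \<Rightarrow> nat \<Rightarrow> 'v set \<Rightarrow> (nat \<Rightarrow> 'v) \<times> (nat \<Rightarrow> 'x) \<Rightarrow> real" where
  "condP_V M F k A = real_cond_exp M F (indicator {\<omega> \<in> space M. fst \<omega> k \<in> A})"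

end

theory Submission
  imports Defs
begin

(* Disintegrate the joint density along the chain.  Summing out X_1, ..., X_(q-1) (each K_i(., v, w)
   is a probability on X) leaves the likelihood of X_(q:n); integrating out V_1, ..., V_(k-1) turns
   the factors with index below k into a backward weight beta_k(x, V_k).  Hence, given V_(k+1:n) and
   X_(q:n), the coordinate V_k has piV-density proportional to K_k(x_k, ., V_(k+1)) beta_k(x, .),
   which depends on V_(k+1) and X_(q:n) only; this is the Markov kernel.  Since nu_k <= K_k <= 1,
   that density dominates nu_k times the normalised beta_k (Doeblin minorisation), and for k < q
   there is no K factor and beta_k = 1, so the kernel is piV itself. *)

lemma nn_integral_count_space_has_sum:
  fixes f :: "'a \<Rightarrow> real"
  assumes sum: "(f has_sum s) A" and nonneg: "\<And>x. x \<in> A \<Longrightarrow> 0 \<le> f x"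
  shows "(\<integral>\<^sup>+x. ennreal (f x) \<partial>count_space A) = ennreal s"
proof -
  have "(\<lambda>x. norm (f x)) summable_on A"
    using has_sum_imp_summable[OF sum] by (rule summable_on_cong[THEN iffD1, rotated]) (simp add: nonneg)
  then have abs: "Infinite_Set_Sum.abs_summable_on f A"
    using abs_summable_equivalent by blast
  have "(\<integral>\<^sup>+x. ennreal (f x) \<partial>count_space A) = ennreal (infsetsum f A)"
    by (rule nn_integral_conv_infsetsum[OF abs nonneg])
  also have "infsetsum f A = s"
    using infsetsum_infsum[OF abs] infsumI[OF sum] by simp
  finally show ?thesis .
qed

lemma PiM_count_space_UNIV:
  "finite I \<Longrightarrow> PiM I (\<lambda>_. count_space (UNIV :: 'a::countable set)) = count_space (PiE I (\<lambda>_. UNIV))"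
  by (rule count_space_PiM_finite) auto

lemma measurable_pair_PiM_count_space:
  fixes f :: "'a \<Rightarrow> ('i \<Rightarrow> 'x::countable) \<Rightarrow> 'b"
  assumes I: "finite I" and f: "\<And>x. x \<in> PiE I (\<lambda>_. UNIV) \<Longrightarrow> (\<lambda>a. f a x) \<in> A \<rightarrow>\<^sub>M B"
  shows "(\<lambda>z. f (fst z) (snd z)) \<in> A \<Otimes>\<^sub>M PiM I (\<lambda>_. count_space UNIV) \<rightarrow>\<^sub>M B"
proof (rule measurable_compose_countable'[where g=snd and I="PiE I (\<lambda>_. UNIV :: 'x set)" and f="\<lambda>x z. f (fst z) x"])
  fix x :: "'i \<Rightarrow> 'x" assume "x \<in> PiE I (\<lambda>_. UNIV)"
  from measurable_compose[OF measurable_fst[of A "PiM I (\<lambda>_. count_space UNIV)"] f[OF this]]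
  show "(\<lambda>z. f (fst z) x) \<in> A \<Otimes>\<^sub>M PiM I (\<lambda>_. count_space UNIV) \<rightarrow>\<^sub>M B" by simp
next
  show "snd \<in> A \<Otimes>\<^sub>M PiM I (\<lambda>_. count_space UNIV) \<rightarrow>\<^sub>M count_space (PiE I (\<lambda>_. UNIV :: 'x set))"
    using measurable_snd[of A "PiM I (\<lambda>_. count_space (UNIV :: 'x set))"]
    unfolding measurable_cong_sets[OF refl arg_cong[OF PiM_count_space_UNIV[OF I], of sets]] .
  show "countable (PiE I (\<lambda>_. UNIV :: 'x set))"
    using I by (simp add: countable_PiE)
qed

lemma set_integral_eq_enn2real_nn_integral:
  fixes g :: "'a \<Rightarrow> real"
  assumes M: "finite_measure M" and A: "A \<in> sets M" and g: "g \<in> borel_measurable M"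
    and g_bounds: "\<And>x. x \<in> space M \<Longrightarrow> 0 \<le> g x \<and> g x \<le> 1"
  shows "(\<integral>x\<in>A. g x \<partial>M) = enn2real (\<integral>\<^sup>+x. indicator A x * ennreal (g x) \<partial>M)"
proof -
  interpret finite_measure M by (rule M)
  have "(\<integral>x\<in>A. g x \<partial>M) = (\<integral>x. indicator A x * g x \<partial>M)"
    unfolding set_lebesgue_integral_def by (rule Bochner_Integration.integral_cong) auto
  also have "\<dots> = enn2real (\<integral>\<^sup>+x. ennreal (indicator A x * g x) \<partial>M)"
    by (rule integral_eq_nn_integral) (use A g g_bounds in auto)
  also have "(\<integral>\<^sup>+x. ennreal (indicator A x * g x) \<partial>M) = (\<integral>\<^sup>+x. indicator A x * ennreal (g x) \<partial>M)"
    by (rule nn_integral_cong) (simp add: indicator_def)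
  finally show ?thesis .
qed

lemma real_cond_exp_vimage_indicator:
  assumes M: "prob_space M" and T: "T \<in> M \<rightarrow>\<^sub>M Y" and g: "g \<in> borel_measurable Y"
    and g_bounds: "\<And>y. y \<in> space Y \<Longrightarrow> 0 \<le> g y \<and> g y \<le> 1"
    and E: "E \<in> sets M"
    and eq: "\<And>B. B \<in> sets Y \<Longrightarrow>
      (\<integral>\<^sup>+\<omega>. indicator B (T \<omega>) * indicator E \<omega> \<partial>M) = (\<integral>\<^sup>+\<omega>. indicator B (T \<omega>) * ennreal (g (T \<omega>)) \<partial>M)"
  shows "AE \<omega> in M. real_cond_exp M (vimage_algebra (space M) T Y) (indicator E) \<omega> = g (T \<omega>)"
proof -
  interpret prob_space M by (rule M)
  let ?F = "vimage_algebra (space M) T Y"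
  have T_space: "T \<in> space M \<rightarrow> space Y"
    using measurable_space[OF T] by auto
  have sets_F: "sets ?F = {T -` B \<inter> space M | B. B \<in> sets Y}"
    by (rule sets_vimage_algebra2[OF T_space])
  interpret F: finite_measure_subalgebra M ?F
    using sets_F measurable_sets[OF T]
    by (intro finite_measure_subalgebra.intro finite_measure_axioms finite_measure_subalgebra_axioms.intro)
      (auto simp: subalgebra_def)
  have gT: "(\<lambda>\<omega>. g (T \<omega>)) \<in> borel_measurable M"
    using measurable_compose[OF T g] .
  have gT_bounds: "\<And>\<omega>. \<omega> \<in> space M \<Longrightarrow> 0 \<le> g (T \<omega>) \<and> g (T \<omega>) \<le> 1"
    using g_bounds T_space by auto
  show ?thesis
  proof (rule F.real_cond_exp_charact)
    fix A assume "A \<in> sets ?F"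
    then obtain B where B: "B \<in> sets Y" and A: "A = T -` B \<inter> space M"
      using sets_F by auto
    have A_sets: "A \<in> sets M"
      using A measurable_sets[OF T B] by simp
    have "\<And>f. (\<integral>\<^sup>+x. indicator A x * f x \<partial>M) = (\<integral>\<^sup>+\<omega>. indicator B (T \<omega>) * f \<omega> \<partial>M)"
      by (rule nn_integral_cong) (auto simp: A indicator_def)
    then show "(\<integral>x\<in>A. indicator E x \<partial>M) = (\<integral>x\<in>A. g (T x) \<partial>M)"
      using eq[OF B] E gT gT_bounds
      by (simp add: set_integral_eq_enn2real_nn_integral[OF finite_measure_axioms A_sets] ennreal_indicator)
  next
    show "integrable M (indicator E :: _ \<Rightarrow> real)"
      by (rule integrable_const_bound[where B=1]) (use E in auto)
    show "integrable M (\<lambda>x. g (T x))"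
      by (rule integrable_const_bound[where B=1]) (use gT gT_bounds in auto)
    show "(\<lambda>x. g (T x)) \<in> borel_measurable ?F"
      using measurable_compose[OF measurable_vimage_algebra1[OF T_space] g] .
  qed
qed

locale hmm_model =
  fixes n q :: nat and piV :: "'v measure"
    and K :: "nat \<Rightarrow> 'x::countable \<Rightarrow> 'v \<Rightarrow> 'v \<Rightarrow> real" and \<nu> :: "nat \<Rightarrow> real"
  assumes piV: "prob_space piV"
    and K_meas: "\<forall>i\<ge>1. \<forall>x. (\<lambda>(v, w). K i x v w) \<in> borel_measurable (piV \<Otimes>\<^sub>M piV)"
    and K_distr: "\<forall>i\<ge>1. \<forall>v\<in>space piV. \<forall>w\<in>space piV. ((\<lambda>x. K i x v w) has_sum 1) UNIV"
    and H2_pos: "\<forall>i\<ge>1. 0 < \<nu> i"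
    and H2: "\<forall>i\<ge>1. \<forall>x. \<forall>v\<in>space piV. \<forall>w\<in>space piV. \<nu> i \<le> K i x v w \<and> K i x v w \<le> 1"
    and q1: "1 \<le> q" and qn: "q \<le> n"
begin

interpretation P: prob_space piV by (rule piV)

interpretation PV: product_sigma_finite "\<lambda>_::nat. piV"
  by (simp add: product_sigma_finite_def P.sigma_finite_measure_axioms)

interpretation PX: product_sigma_finite "\<lambda>_::nat. count_space (UNIV::'x set)"
  by (simp add: product_sigma_finite_def sigma_finite_measure_count_space)

abbreviation PiV :: "nat set \<Rightarrow> (nat \<Rightarrow> 'v) measure" where
  "PiV I \<equiv> PiM I (\<lambda>_. piV)"

abbreviation PiX :: "nat set \<Rightarrow> (nat \<Rightarrow> 'x) measure" where
  "PiX I \<equiv> PiM I (\<lambda>_. count_space UNIV)"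

lemma prob_space_PiV: "prob_space (PiV I)"
  by (rule prob_space_PiM) (simp add: piV)

lemma sigma_finite_PiX: "finite I \<Longrightarrow> sigma_finite_measure (PiX I)"
  by (simp add: PiM_count_space_UNIV sigma_finite_measure_count_space_countable countable_PiE)

lemma nu_pos: "1 \<le> i \<Longrightarrow> 0 < \<nu> i"
  using H2_pos by auto

lemma K_bounds:
  "1 \<le> i \<Longrightarrow> v \<in> space piV \<Longrightarrow> w \<in> space piV \<Longrightarrow> \<nu> i \<le> K i x v w \<and> K i x v w \<le> 1"
  using H2 by auto

lemma K_nonneg: "1 \<le> i \<Longrightarrow> v \<in> space piV \<Longrightarrow> w \<in> space piV \<Longrightarrow> 0 \<le> K i x v w"
  using K_bounds[of i v w x] nu_pos[of i] by linarith

lemma nn_integral_K: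
  "1 \<le> i \<Longrightarrow> v \<in> space piV \<Longrightarrow> w \<in> space piV \<Longrightarrow>
    (\<integral>\<^sup>+x. ennreal (K i x v w) \<partial>count_space UNIV) = 1"
  using nn_integral_count_space_has_sum[of "\<lambda>x. K i x v w" UNIV 1] K_distr K_nonneg by auto

lemma measurable_K:
  assumes "1 \<le> i" "a \<in> M \<rightarrow>\<^sub>M piV" "b \<in> M \<rightarrow>\<^sub>M piV"
  shows "(\<lambda>z. K i c (a z) (b z)) \<in> borel_measurable M"
  using measurable_compose[OF measurable_Pair[OF assms(2,3)], of "\<lambda>(v, w). K i c v w"] K_meas assms(1)
  by auto

lemma measurable_K_ennreal:
  "1 \<le> i \<Longrightarrow> a \<in> M \<rightarrow>\<^sub>M piV \<Longrightarrow> b \<in> M \<rightarrow>\<^sub>M piV \<Longrightarrow>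
    (\<lambda>z. ennreal (K i c (a z) (b z))) \<in> borel_measurable M"
  using measurable_K by measurable

lemma measurable_K_prod:
  assumes "\<And>i. i \<in> J \<Longrightarrow> 1 \<le> i \<and> i \<in> I \<and> Suc i \<in> I"
  shows "(\<lambda>a. \<Prod>i\<in>J. ennreal (K i (x i) (a i) (a (Suc i)))) \<in> borel_measurable (PiV I)"
  using assms by (intro borel_measurable_prod_ennreal measurable_K_ennreal) auto

text \<open>\<open>backward_weight k x v\<close> is the likelihood of the observations \<open>x q, \<dots>, x (k - 1)\<close> given
  \<open>V\<^sub>k = v\<close>, obtained by integrating out \<open>V\<^sub>1, \<dots>, V\<^sub>k\<^sub>-\<^sub>1\<close>.\<close>

primrec backward_weight :: "nat \<Rightarrow> (nat \<Rightarrow> 'x) \<Rightarrow> 'v \<Rightarrow> ennreal" where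
  "backward_weight 0 x v = 1"
| "backward_weight (Suc k) x v =
    (if q \<le> k then \<integral>\<^sup>+u. ennreal (K k (x k) u v) * backward_weight k x u \<partial>piV else 1)"

lemma backward_weight_eq_1: "k \<le> q \<Longrightarrow> backward_weight k x v = 1"
  by (induction k) auto

lemma measurable_backward_weight: "backward_weight k x \<in> borel_measurable piV"
proof (induction k)
  case (Suc k)
  show ?case
  proof (cases "q \<le> k")
    case True
    have "(\<lambda>z. ennreal (K k (x k) (snd z) (fst z)) * backward_weight k x (snd z))
        \<in> borel_measurable (piV \<Otimes>\<^sub>M piV)"
      using True q1 by (intro borel_measurable_times_ennreal measurable_K_ennreal
        measurable_compose[OF measurable_snd Suc.IH]) auto
    then have "(\<lambda>(v, u). ennreal (K k (x k) u v) * backward_weight k x u) \<in> borel_measurable (piV \<Otimes>\<^sub>M piV)"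
      by (simp add: case_prod_beta')
    from P.borel_measurable_nn_integral[OF this] show ?thesis
      using True by simp
  qed simp
qed simp

lemma prod_nu_pos: "0 < prod \<nu> {q..<k}"
  using nu_pos q1 by (intro prod_pos) auto

lemma backward_weight_bounds:
  "v \<in> space piV \<Longrightarrow> ennreal (prod \<nu> {q..<k}) \<le> backward_weight k x v \<and> backward_weight k x v \<le> 1"
proof (induction k arbitrary: v)
  case (Suc k)
  show ?case
  proof (cases "q \<le> k")
    case True
    have K_bounds': "\<nu> k \<le> K k (x k) u v" "K k (x k) u v \<le> 1" if "u \<in> space piV" for u
      using K_bounds[of k u v] True q1 that Suc.prems by auto
    have nonneg: "0 \<le> \<nu> k" "0 \<le> prod \<nu> {q..<k}"
      using nu_pos[of k] prod_nu_pos[of k] q1 True by auto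
    have "ennreal (\<nu> k * prod \<nu> {q..<k}) \<le> ennreal (K k (x k) u v) * backward_weight k x u"
      if "u \<in> space piV" for u
      using K_bounds'[OF that] Suc.IH[OF that] nonneg by (simp add: ennreal_mult mult_mono)
    then have "(\<integral>\<^sup>+u. ennreal (\<nu> k * prod \<nu> {q..<k}) \<partial>piV)
        \<le> (\<integral>\<^sup>+u. ennreal (K k (x k) u v) * backward_weight k x u \<partial>piV)"
      by (intro nn_integral_mono)
    moreover have "ennreal (K k (x k) u v) * backward_weight k x u \<le> 1" if "u \<in> space piV" for u
      using K_bounds'[OF that] Suc.IH[OF that]
        mult_mono[of "ennreal (K k (x k) u v)" 1 "backward_weight k x u" 1] by simp
    then have "(\<integral>\<^sup>+u. ennreal (K k (x k) u v) * backward_weight k x u \<partial>piV) \<le> (\<integral>\<^sup>+u. 1 \<partial>piV)"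
      by (intro nn_integral_mono)
    ultimately show ?thesis
      using True by (simp add: P.emeasure_space_1 mult.commute)
  qed simp
qed simp

text \<open>Given \<open>V\<^sub>k\<^sub>+\<^sub>1 = w\<close> and the observations \<open>x\<close>, the law of \<open>V\<^sub>k\<close> has this density with respect
  to \<open>piV\<close>, up to normalisation; the factor \<open>K\<close> is absent for \<open>k < q\<close> because \<open>X\<^sub>k\<close> is not observed.\<close>

definition cond_density :: "nat \<Rightarrow> (nat \<Rightarrow> 'x) \<Rightarrow> 'v \<Rightarrow> 'v \<Rightarrow> ennreal" where
  "cond_density k x w v = (if q \<le> k then ennreal (K k (x k) v w) else 1) * backward_weight k x v"

definition cond_normaliser :: "nat \<Rightarrow> (nat \<Rightarrow> 'x) \<Rightarrow> 'v \<Rightarrow> ennreal" where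
  "cond_normaliser k x w = (\<integral>\<^sup>+v. cond_density k x w v \<partial>piV)"

definition cond_kernel :: "nat \<Rightarrow> (nat \<Rightarrow> 'x) \<Rightarrow> 'v \<Rightarrow> 'v measure" where
  "cond_kernel k x w =
    (if w \<in> space piV then density piV (\<lambda>v. cond_density k x w v / cond_normaliser k x w) else piV)"

lemma measurable_cond_density_pair:
  "(\<lambda>z. cond_density k x (fst z) (snd z)) \<in> borel_measurable (piV \<Otimes>\<^sub>M piV)"
proof -
  have "(\<lambda>z. ennreal (K k (x k) (snd z) (fst z))) \<in> borel_measurable (piV \<Otimes>\<^sub>M piV)" if "q \<le> k"
    using that q1 by (intro measurable_K_ennreal) auto
  then show ?thesis
    unfolding cond_density_def
    using measurable_compose[OF measurable_snd measurable_backward_weight]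
    by (cases "q \<le> k") (auto intro: borel_measurable_times_ennreal)
qed

lemma measurable_cond_density:
  assumes "w \<in> space piV"
  shows "cond_density k x w \<in> borel_measurable piV"
proof -
  have "(\<lambda>v. (w, v)) \<in> piV \<rightarrow>\<^sub>M piV \<Otimes>\<^sub>M piV"
    using assms by (intro measurable_Pair) auto
  from measurable_compose[OF this measurable_cond_density_pair] show ?thesis
    by simp
qed

lemma cond_density_bounds:
  assumes v: "v \<in> space piV" and w: "w \<in> space piV"
  shows "ennreal ((if q \<le> k then \<nu> k else 1) * prod \<nu> {q..<k}) \<le> cond_density k x w v
    \<and> cond_density k x w v \<le> 1"
proof (cases "q \<le> k")
  case True
  have "1 \<le> k" using True q1 by simp
  then have K: "\<nu> k \<le> K k (x k) v w" "K k (x k) v w \<le> 1" "0 \<le> \<nu> k"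
    using K_bounds[of k v w] nu_pos[of k] v w by auto
  have b: "ennreal (prod \<nu> {q..<k}) \<le> backward_weight k x v" "backward_weight k x v \<le> 1"
    using backward_weight_bounds[OF v] by auto
  have "ennreal (\<nu> k * prod \<nu> {q..<k}) \<le> ennreal (K k (x k) v w) * backward_weight k x v"
    using K b prod_nu_pos[of k] by (simp add: ennreal_mult mult_mono)
  moreover have "ennreal (K k (x k) v w) * backward_weight k x v \<le> 1"
    using K b mult_mono[of "ennreal (K k (x k) v w)" 1 "backward_weight k x v" 1] by simp
  ultimately show ?thesis
    using True unfolding cond_density_def by simp
qed (use backward_weight_eq_1[of k x v] in \<open>simp add: cond_density_def\<close>)

lemma cond_normaliser_nonzero_finite:
  assumes w: "w \<in> space piV"
  shows "cond_normaliser k x w \<noteq> 0 \<and> cond_normaliser k x w < \<top>"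
proof -
  define c where "c = (if q \<le> k then \<nu> k else 1) * prod \<nu> {q..<k}"
  have "(\<integral>\<^sup>+v. ennreal c \<partial>piV) \<le> cond_normaliser k x w"
    unfolding cond_normaliser_def c_def
    by (rule nn_integral_mono) (use cond_density_bounds w in auto)
  moreover have "cond_normaliser k x w \<le> (\<integral>\<^sup>+v. 1 \<partial>piV)"
    unfolding cond_normaliser_def by (rule nn_integral_mono) (use cond_density_bounds w in auto)
  moreover have "0 < ennreal c"
    unfolding c_def using nu_pos[of k] prod_nu_pos[of k] q1 by auto
  ultimately show ?thesis
    by (auto simp: P.emeasure_space_1 top_unique intro: order.strict_trans1)
qed

lemma sets_cond_kernel: "sets (cond_kernel k x w) = sets piV"
  unfolding cond_kernel_def by simp

lemma emeasure_cond_kernel: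
  assumes w: "w \<in> space piV" and A: "A \<in> sets piV"
  shows "emeasure (cond_kernel k x w) A
    = (\<integral>\<^sup>+v. cond_density k x w v * indicator A v \<partial>piV) / cond_normaliser k x w"
proof -
  have "emeasure (cond_kernel k x w) A
      = (\<integral>\<^sup>+v. cond_density k x w v / cond_normaliser k x w * indicator A v \<partial>piV)"
    unfolding cond_kernel_def using w A measurable_cond_density[OF w] by (simp add: emeasure_density)
  also have "\<dots> = (\<integral>\<^sup>+v. cond_density k x w v * indicator A v / cond_normaliser k x w \<partial>piV)"
    by (rule nn_integral_cong) (simp add: divide_ennreal_def mult_ac)
  also have "\<dots> = (\<integral>\<^sup>+v. cond_density k x w v * indicator A v \<partial>piV) / cond_normaliser k x w"
    by (rule nn_integral_divide) (use A measurable_cond_density[OF w] in simp)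
  finally show ?thesis .
qed

lemma prob_space_cond_kernel: "prob_space (cond_kernel k x w)"
proof (cases "w \<in> space piV")
  case True
  have "(\<integral>\<^sup>+v. cond_density k x w v * indicator (space piV) v \<partial>piV) = cond_normaliser k x w"
    unfolding cond_normaliser_def by (rule nn_integral_cong) simp
  then have "emeasure (cond_kernel k x w) (space piV) = 1"
    using emeasure_cond_kernel[OF True, of "space piV"] cond_normaliser_nonzero_finite[OF True, of k x]
    by simp
  then show ?thesis
    using True by (intro prob_spaceI) (simp add: cond_kernel_def)
qed (simp add: cond_kernel_def piV)

lemma measure_cond_kernel:
  assumes w: "w \<in> space piV" and A: "A \<in> sets piV"
  shows "ennreal (measure (cond_kernel k x w) A)
    = (\<integral>\<^sup>+v. cond_density k x w v * indicator A v \<partial>piV) / cond_normaliser k x w"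
proof -
  interpret prob_space "cond_kernel k x w"
    by (rule prob_space_cond_kernel)
  show ?thesis
    by (simp add: emeasure_eq_measure[symmetric] emeasure_cond_kernel[OF w A])
qed

lemma nn_integral_cond_density_indicator:
  assumes w: "w \<in> space piV" and A: "A \<in> sets piV"
  shows "(\<integral>\<^sup>+v. cond_density k x w v * indicator A v \<partial>piV)
    = cond_normaliser k x w * ennreal (measure (cond_kernel k x w) A)"
proof -
  have "cond_normaliser k x w \<noteq> 0" "cond_normaliser k x w \<noteq> \<top>"
    using cond_normaliser_nonzero_finite[OF w, of k x] by auto
  then show ?thesis
    unfolding measure_cond_kernel[OF w A] ennreal_times_divide
    by (simp add: ennreal_mult_divide_eq mult.commute[of "cond_normaliser k x w"])
qed

lemma measurable_cond_kernel:
  assumes A: "A \<in> sets piV"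
  shows "(\<lambda>w. measure (cond_kernel k x w) A) \<in> borel_measurable piV"
proof -
  have "(\<lambda>z. cond_density k x (fst z) (snd z) * indicator A (snd z)) \<in> borel_measurable (piV \<Otimes>\<^sub>M piV)"
    using measurable_cond_density_pair A
    by (intro borel_measurable_times_ennreal) (auto intro: measurable_compose[OF measurable_snd])
  then have numerator: "(\<lambda>w. \<integral>\<^sup>+v. cond_density k x w v * indicator A v \<partial>piV) \<in> borel_measurable piV"
    by (intro P.borel_measurable_nn_integral) (simp add: case_prod_beta')
  have normaliser: "cond_normaliser k x \<in> borel_measurable piV"
    unfolding cond_normaliser_def[abs_def] using measurable_cond_density_pair
    by (intro P.borel_measurable_nn_integral) (simp add: case_prod_beta')
  have quotient: "(\<lambda>w. enn2real ((\<integral>\<^sup>+v. cond_density k x w v * indicator A v \<partial>piV)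
      / cond_normaliser k x w)) \<in> borel_measurable piV"
    using numerator normaliser by (intro borel_measurable_enn2real borel_measurable_divide_ennreal)
  have eq: "enn2real ((\<integral>\<^sup>+v. cond_density k x w v * indicator A v \<partial>piV) / cond_normaliser k x w)
      = measure (cond_kernel k x w) A" if "w \<in> space piV" for w
    using measure_cond_kernel[OF that A, symmetric] by simp
  from measurable_cong[THEN iffD1, OF eq quotient] show ?thesis .
qed

lemma measure_cond_kernel_below_q:
  assumes k: "k < q" and A: "A \<in> sets piV" and w: "w \<in> space piV"
  shows "measure (cond_kernel k x w) A = measure piV A"
proof -
  have density_1: "cond_density k x w v = 1" for v
    unfolding cond_density_def using k backward_weight_eq_1[of k x v] by simp
  have "ennreal (measure (cond_kernel k x w) A) = emeasure piV A"
    using measure_cond_kernel[OF w A, of k x] A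
    by (simp add: density_1 cond_normaliser_def P.emeasure_space_1 divide_ennreal_def)
  then show ?thesis
    by (simp add: P.emeasure_eq_measure)
qed

definition backward_mass :: "nat \<Rightarrow> (nat \<Rightarrow> 'x) \<Rightarrow> ennreal" where
  "backward_mass k x = (\<integral>\<^sup>+v. backward_weight k x v \<partial>piV)"

definition minorising_measure :: "nat \<Rightarrow> (nat \<Rightarrow> 'x) \<Rightarrow> 'v measure" where
  "minorising_measure k x = density piV (\<lambda>v. backward_weight k x v / backward_mass k x)"

lemma backward_mass_nonzero_finite: "backward_mass k x \<noteq> 0 \<and> backward_mass k x < \<top>"
proof -
  define c where "c = prod \<nu> {q..<k}"
  have "(\<integral>\<^sup>+v. ennreal c \<partial>piV) \<le> backward_mass k x"
    unfolding backward_mass_def c_def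
    by (rule nn_integral_mono) (use backward_weight_bounds in auto)
  moreover have "backward_mass k x \<le> (\<integral>\<^sup>+v. 1 \<partial>piV)"
    unfolding backward_mass_def by (rule nn_integral_mono) (use backward_weight_bounds in auto)
  moreover have "0 < ennreal c"
    unfolding c_def using prod_nu_pos[of k] by simp
  ultimately show ?thesis
    by (auto simp: P.emeasure_space_1 top_unique intro: order.strict_trans1)
qed

lemma emeasure_minorising_measure:
  assumes A: "A \<in> sets piV"
  shows "emeasure (minorising_measure k x) A
    = (\<integral>\<^sup>+v. backward_weight k x v * indicator A v \<partial>piV) / backward_mass k x"
proof -
  have "emeasure (minorising_measure k x) A
      = (\<integral>\<^sup>+v. backward_weight k x v / backward_mass k x * indicator A v \<partial>piV)"
    unfolding minorising_measure_def using A measurable_backward_weight by (simp add: emeasure_density)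
  also have "\<dots> = (\<integral>\<^sup>+v. backward_weight k x v * indicator A v / backward_mass k x \<partial>piV)"
    by (rule nn_integral_cong) (simp add: divide_ennreal_def mult_ac)
  also have "\<dots> = (\<integral>\<^sup>+v. backward_weight k x v * indicator A v \<partial>piV) / backward_mass k x"
    by (rule nn_integral_divide) (use A measurable_backward_weight in simp)
  finally show ?thesis .
qed

lemma prob_space_minorising_measure:
  "prob_space (minorising_measure k x) \<and> sets (minorising_measure k x) = sets piV"
proof
  have "(\<integral>\<^sup>+v. backward_weight k x v * indicator (space piV) v \<partial>piV) = backward_mass k x"
    unfolding backward_mass_def by (rule nn_integral_cong) simp
  then have "emeasure (minorising_measure k x) (space piV) = 1"
    using emeasure_minorising_measure[of "space piV" k x] backward_mass_nonzero_finite[of k x] by simp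
  then show "prob_space (minorising_measure k x)"
    by (intro prob_spaceI) (simp add: minorising_measure_def)
qed (simp add: minorising_measure_def)

lemma nn_integral_backward_weight_indicator:
  assumes A: "A \<in> sets piV"
  shows "(\<integral>\<^sup>+v. backward_weight k x v * indicator A v \<partial>piV)
    = backward_mass k x * ennreal (measure (minorising_measure k x) A)"
proof -
  interpret prob_space "minorising_measure k x"
    using prob_space_minorising_measure by auto
  have "backward_mass k x \<noteq> 0" "backward_mass k x \<noteq> \<top>"
    using backward_mass_nonzero_finite[of k x] by auto
  then show ?thesis
    unfolding emeasure_eq_measure[symmetric] emeasure_minorising_measure[OF A] ennreal_times_divide
    by (simp add: ennreal_mult_divide_eq mult.commute[of "backward_mass k x"])
qed

text \<open>Doeblin minorisation: \<open>K \<ge> \<nu>\<^sub>k\<close> bounds the numerator of \<open>cond_kernel\<close> from below by \<open>\<nu>\<^sub>k\<close>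
  times that of \<open>minorising_measure\<close>, while \<open>K \<le> 1\<close> makes its normaliser the smaller one.\<close>

lemma measure_cond_kernel_ge_minorising:
  assumes k: "q \<le> k" and A: "A \<in> sets piV" and w: "w \<in> space piV"
  shows "\<nu> k * measure (minorising_measure k x) A \<le> measure (cond_kernel k x w) A"
proof -
  have k1: "1 \<le> k"
    using k q1 by simp
  have normalisers: "cond_normaliser k x w \<le> backward_mass k x"
    unfolding cond_normaliser_def backward_mass_def cond_density_def
  proof (intro nn_integral_mono)
    fix v assume "v \<in> space piV"
    then have "ennreal (K k (x k) v w) \<le> 1"
      using K_bounds[OF k1 _ w] by simp
    then show "(if q \<le> k then ennreal (K k (x k) v w) else 1) * backward_weight k x v
        \<le> backward_weight k x v"
      using k mult_right_mono[of "ennreal (K k (x k) v w)" 1 "backward_weight k x v"] by simp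
  qed
  have numerators: "ennreal (\<nu> k) * (\<integral>\<^sup>+v. backward_weight k x v * indicator A v \<partial>piV)
      \<le> (\<integral>\<^sup>+v. cond_density k x w v * indicator A v \<partial>piV)"
  proof (subst nn_integral_cmult[symmetric])
    show "(\<lambda>v. backward_weight k x v * indicator A v) \<in> borel_measurable piV"
      using measurable_backward_weight A by simp
    have "ennreal (\<nu> k) * backward_weight k x v \<le> cond_density k x w v" if "v \<in> space piV" for v
      unfolding cond_density_def using k K_bounds[OF k1 that w]
      by (simp add: ennreal_leI mult_right_mono)
    then show "(\<integral>\<^sup>+v. ennreal (\<nu> k) * (backward_weight k x v * indicator A v) \<partial>piV)
        \<le> (\<integral>\<^sup>+v. cond_density k x w v * indicator A v \<partial>piV)"
      by (intro nn_integral_mono) (simp add: indicator_def)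
  qed
  have "backward_mass k x * ennreal (\<nu> k * measure (minorising_measure k x) A)
      = ennreal (\<nu> k) * (\<integral>\<^sup>+v. backward_weight k x v * indicator A v \<partial>piV)"
    unfolding nn_integral_backward_weight_indicator[OF A] using nu_pos[OF k1]
    by (simp add: ennreal_mult mult_ac)
  also have "\<dots> \<le> cond_normaliser k x w * ennreal (measure (cond_kernel k x w) A)"
    using numerators unfolding nn_integral_cond_density_indicator[OF w A] .
  also have "\<dots> \<le> backward_mass k x * ennreal (measure (cond_kernel k x w) A)"
    using normalisers by (rule mult_right_mono) simp
  finally have "ennreal (\<nu> k * measure (minorising_measure k x) A) \<le> ennreal (measure (cond_kernel k x w) A)"
    using backward_mass_nonzero_finite[of k x] ennreal_mult_le_mult_iff[of "backward_mass k x"] by auto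
  then show ?thesis
    by (simp add: ennreal_le_iff)
qed

lemma nn_integral_backward_weight:
  assumes "1 \<le> k" and g: "g \<in> borel_measurable piV"
  shows "(\<integral>\<^sup>+a. (\<Prod>i\<in>{q..<k}. ennreal (K i (x i) (a i) (a (Suc i)))) * g (a k) \<partial>PiV {1..k})
    = (\<integral>\<^sup>+v. backward_weight k x v * g v \<partial>piV)"
  using assms
proof (induction k arbitrary: g)
  case (Suc k)
  show ?case
  proof (cases "k = 0")
    case True
    then show ?thesis
      using PV.product_nn_integral_singleton[OF Suc.prems(2), of 1] q1 by simp
  next
    case False
    let ?F = "\<lambda>a. (\<Prod>i\<in>{q..<Suc k}. ennreal (K i (x i) (a i) (a (Suc i)))) * g (a (Suc k))"
    have ins: "{1..Suc k} = insert (Suc k) {1..k}"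
      by auto
    have "?F \<in> borel_measurable (PiV (insert (Suc k) {1..k}))"
      using q1 Suc.prems(2) by (intro borel_measurable_times_ennreal measurable_K_prod) auto
    then have "(\<integral>\<^sup>+a. ?F a \<partial>PiV {1..Suc k}) = (\<integral>\<^sup>+y. (\<integral>\<^sup>+a. ?F (a(Suc k := y)) \<partial>PiV {1..k}) \<partial>piV)"
      unfolding ins by (intro PV.product_nn_integral_insert_rev) auto
    also have "\<dots> = (\<integral>\<^sup>+y. backward_weight (Suc k) x y * g y \<partial>piV)"
    proof (rule nn_integral_cong)
      fix y assume y: "y \<in> space piV"
      show "(\<integral>\<^sup>+a. ?F (a(Suc k := y)) \<partial>PiV {1..k}) = backward_weight (Suc k) x y * g y"
      proof (cases "q \<le> k")
        case True
        let ?G = "\<lambda>a. (\<Prod>i\<in>{q..<k}. ennreal (K i (x i) (a i) (a (Suc i)))) * ennreal (K k (x k) (a k) y)"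
        have "?F (a(Suc k := y)) = ?G a * g y" for a
        proof -
          have "{q..<Suc k} = insert k {q..<k}"
            using True by auto
          moreover have "(\<Prod>i\<in>{q..<k}. ennreal (K i (x i) ((a(Suc k := y)) i) ((a(Suc k := y)) (Suc i))))
              = (\<Prod>i\<in>{q..<k}. ennreal (K i (x i) (a i) (a (Suc i))))"
            by (rule prod.cong) auto
          ultimately show ?thesis
            by (simp add: mult_ac)
        qed
        then have "(\<integral>\<^sup>+a. ?F (a(Suc k := y)) \<partial>PiV {1..k}) = (\<integral>\<^sup>+a. ?G a \<partial>PiV {1..k}) * g y"
          using q1 y False by (simp, intro nn_integral_multc borel_measurable_times_ennreal
            measurable_K_prod measurable_K_ennreal) auto
        also have "(\<integral>\<^sup>+a. ?G a \<partial>PiV {1..k}) = (\<integral>\<^sup>+v. backward_weight k x v * ennreal (K k (x k) v y) \<partial>piV)"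
          using False y by (intro Suc.IH measurable_K_ennreal) auto
        finally show ?thesis
          using True by (simp add: mult_ac)
      next
        case False
        then show ?thesis
          using prob_space.emeasure_space_1[OF prob_space_PiV] by simp
      qed
    qed
    finally show ?thesis .
  qed
qed simp

definition future_likelihood :: "nat \<Rightarrow> (nat \<Rightarrow> 'v) \<Rightarrow> (nat \<Rightarrow> 'x) \<Rightarrow> ennreal" where
  "future_likelihood k b x = (\<Prod>i\<in>{i\<in>{q..n}. k < i}. ennreal (K i (x i) (b i) (b (Suc i))))"

definition future_marginal :: "nat \<Rightarrow> (nat \<Rightarrow> 'v) \<Rightarrow> (nat \<Rightarrow> 'x) \<Rightarrow> ennreal" where
  "future_marginal k b x = (\<integral>\<^sup>+u. future_likelihood k (b(Suc n := u)) x \<partial>piV)"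

definition obs_likelihood :: "(nat \<Rightarrow> 'v) \<Rightarrow> (nat \<Rightarrow> 'x) \<Rightarrow> ennreal" where
  "obs_likelihood v x = (\<Prod>i\<in>{q..n}. ennreal (K i (x i) (v i) (v (Suc i))))"

lemma measurable_future_likelihood:
  "(\<lambda>b. future_likelihood k b x) \<in> borel_measurable (PiV {Suc k..Suc n})"
  unfolding future_likelihood_def by (rule measurable_K_prod) (use q1 in auto)

lemma measurable_future_marginal:
  assumes "k < n"
  shows "(\<lambda>b. future_marginal k b x) \<in> borel_measurable (PiV {Suc k..n})"
proof -
  have "(\<lambda>z. (fst z)(Suc n := snd z)) \<in> PiV {Suc k..n} \<Otimes>\<^sub>M piV \<rightarrow>\<^sub>M PiV {Suc k..Suc n}"
  proof (rule measurable_PiM_single')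
    show "(\<lambda>z. ((fst z)(Suc n := snd z)) i) \<in> PiV {Suc k..n} \<Otimes>\<^sub>M piV \<rightarrow>\<^sub>M piV"
      if "i \<in> {Suc k..Suc n}" for i
      using that by (cases "i = Suc n") auto
    show "(\<lambda>z. (fst z)(Suc n := snd z)) \<in> space (PiV {Suc k..n} \<Otimes>\<^sub>M piV) \<rightarrow> (\<Pi>\<^sub>E i\<in>{Suc k..Suc n}. space piV)"
      using assms by (auto simp: space_pair_measure space_PiM PiE_def extensional_def Pi_def)
  qed
  from measurable_compose[OF this measurable_future_likelihood]
  have "(\<lambda>(b, u). future_likelihood k (b(Suc n := u)) x) \<in> borel_measurable (PiV {Suc k..n} \<Otimes>\<^sub>M piV)"
    by (simp add: case_prod_beta')
  then show ?thesis
    unfolding future_marginal_def by (rule P.borel_measurable_nn_integral)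
qed

lemma nn_integral_future_likelihood:
  assumes k: "k < n" and \<Phi>: "\<Phi> \<in> borel_measurable (PiV {Suc k..n})"
  shows "(\<integral>\<^sup>+b. future_likelihood k b x * \<Phi> (restrict b {Suc k..n}) \<partial>PiV {Suc k..Suc n})
    = (\<integral>\<^sup>+b. future_marginal k b x * \<Phi> b \<partial>PiV {Suc k..n})"
proof -
  let ?S = "{Suc k..n}"
  have ins: "{Suc k..Suc n} = insert (Suc n) ?S"
    using k by auto
  have "(\<lambda>b. future_likelihood k b x * \<Phi> (restrict b ?S)) \<in> borel_measurable (PiV (insert (Suc n) ?S))"
    using measurable_future_likelihood[of k x] measurable_compose[OF measurable_restrict_subset \<Phi>]
    unfolding ins by (intro borel_measurable_times_ennreal) auto
  then have "(\<integral>\<^sup>+b. future_likelihood k b x * \<Phi> (restrict b ?S) \<partial>PiV {Suc k..Suc n})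
      = (\<integral>\<^sup>+b. (\<integral>\<^sup>+u. future_likelihood k (b(Suc n := u)) x * \<Phi> (restrict (b(Suc n := u)) ?S) \<partial>piV)
          \<partial>PiV ?S)"
    unfolding ins by (intro PV.product_nn_integral_insert) auto
  also have "\<dots> = (\<integral>\<^sup>+b. future_marginal k b x * \<Phi> b \<partial>PiV ?S)"
  proof (rule nn_integral_cong)
    fix b assume b: "b \<in> space (PiV ?S)"
    then have "restrict (b(Suc n := u)) ?S = b" for u
      by (auto simp: space_PiM restrict_def fun_eq_iff PiE_def extensional_def)
    moreover have "(\<lambda>u. b(Suc n := u)) \<in> piV \<rightarrow>\<^sub>M PiV {Suc k..Suc n}"
      unfolding ins using measurable_component_update[OF b, of "Suc n"] by simp
    then have "(\<lambda>u. future_likelihood k (b(Suc n := u)) x) \<in> borel_measurable piV"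
      using measurable_compose[OF _ measurable_future_likelihood] by blast
    ultimately show "(\<integral>\<^sup>+u. future_likelihood k (b(Suc n := u)) x * \<Phi> (restrict (b(Suc n := u)) ?S) \<partial>piV)
        = future_marginal k b x * \<Phi> b"
      unfolding future_marginal_def by (simp add: nn_integral_multc)
  qed
  finally show ?thesis .
qed

lemma measurable_cond_integral:
  assumes k: "k < n" and G: "(\<lambda>z. G (fst z) (snd z)) \<in> borel_measurable (piV \<Otimes>\<^sub>M PiV {Suc k..n})"
  shows "(\<lambda>b. \<integral>\<^sup>+u. cond_density k x (b (Suc k)) u * G u b \<partial>piV) \<in> borel_measurable (PiV {Suc k..n})"
proof (rule P.borel_measurable_nn_integral)
  have "(\<lambda>z. (fst z (Suc k), snd z)) \<in> PiV {Suc k..n} \<Otimes>\<^sub>M piV \<rightarrow>\<^sub>M piV \<Otimes>\<^sub>M piV"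
    using k by (intro measurable_Pair) auto
  from measurable_compose[OF this measurable_cond_density_pair]
  have "(\<lambda>z. cond_density k x (fst z (Suc k)) (snd z)) \<in> borel_measurable (PiV {Suc k..n} \<Otimes>\<^sub>M piV)"
    by simp
  moreover have "(\<lambda>z. G (snd z) (fst z)) \<in> borel_measurable (PiV {Suc k..n} \<Otimes>\<^sub>M piV)"
    using measurable_compose[OF measurable_Pair[OF measurable_snd measurable_fst] G] by simp
  ultimately show "(\<lambda>(b, u). cond_density k x (b (Suc k)) u * G u b) \<in> borel_measurable (PiV {Suc k..n} \<Otimes>\<^sub>M piV)"
    unfolding case_prod_beta' by (rule borel_measurable_times_ennreal)
qed

lemma obs_likelihood_merge:
  assumes k: "1 \<le> k" "k < n"
  shows "obs_likelihood (merge {Suc k..Suc n} {1..k} (b, a)) x = future_likelihood k b x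
    * ((\<Prod>i\<in>{q..<k}. ennreal (K i (x i) (a i) (a (Suc i))))
      * (if q \<le> k then ennreal (K k (x k) (a k) (b (Suc k))) else 1))"
proof -
  let ?m = "merge {Suc k..Suc n} {1..k} (b, a)"
  let ?f = "\<lambda>i. ennreal (K i (x i) (?m i) (?m (Suc i)))"
  define F where "F = {i\<in>{q..n}. k < i}"
  have future: "prod ?f F = future_likelihood k b x"
    unfolding future_likelihood_def F_def by (intro prod.cong) (auto simp: merge_def)
  have past: "prod ?f {q..<k} = (\<Prod>i\<in>{q..<k}. ennreal (K i (x i) (a i) (a (Suc i))))"
    using q1 by (intro prod.cong) (auto simp: merge_def)
  show ?thesis
  proof (cases "q \<le> k")
    case True
    have split: "{q..n} = F \<union> insert k {q..<k}" and disjoint: "F \<inter> insert k {q..<k} = {}"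
      using True k by (auto simp: F_def)
    have "obs_likelihood ?m x = prod ?f F * prod ?f (insert k {q..<k})"
      unfolding obs_likelihood_def split
      by (rule prod.union_disjoint) (use disjoint in \<open>auto simp: F_def\<close>)
    moreover have "prod ?f (insert k {q..<k}) = ?f k * prod ?f {q..<k}"
      by (rule prod.insert) auto
    ultimately have "obs_likelihood ?m x = prod ?f F * (?f k * prod ?f {q..<k})"
      by simp
    then show ?thesis
      using True k future past by (simp add: merge_def mult_ac)
  next
    case False
    then have "{q..n} = F"
      by (auto simp: F_def)
    then show ?thesis
      using False future unfolding obs_likelihood_def by simp
  qed
qed

lemma nn_integral_obs_likelihood_past:
  assumes k: "1 \<le> k" "k < n" and b: "b \<in> space (PiV {Suc k..Suc n})" and H: "H \<in> borel_measurable piV"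
  shows "(\<integral>\<^sup>+a. obs_likelihood (merge {Suc k..Suc n} {1..k} (b, a)) x * H (a k) \<partial>PiV {1..k})
    = future_likelihood k b x * (\<integral>\<^sup>+u. cond_density k x (b (Suc k)) u * H u \<partial>piV)"
proof -
  define g where "g v = (if q \<le> k then ennreal (K k (x k) v (b (Suc k))) else 1) * H v" for v
  have "b (Suc k) \<in> space piV"
    using b k by (auto simp: space_PiM)
  then have "(\<lambda>v. if q \<le> k then ennreal (K k (x k) v (b (Suc k))) else 1) \<in> borel_measurable piV"
    using q1 by (cases "q \<le> k") (auto intro!: measurable_K_ennreal)
  then have g: "g \<in> borel_measurable piV"
    unfolding g_def using H by (rule borel_measurable_times_ennreal)
  have "(\<integral>\<^sup>+a. obs_likelihood (merge {Suc k..Suc n} {1..k} (b, a)) x * H (a k) \<partial>PiV {1..k})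
      = (\<integral>\<^sup>+a. future_likelihood k b x
          * ((\<Prod>i\<in>{q..<k}. ennreal (K i (x i) (a i) (a (Suc i)))) * g (a k)) \<partial>PiV {1..k})"
    unfolding obs_likelihood_merge[OF k] g_def by (simp add: mult_ac)
  also have "\<dots> = future_likelihood k b x * (\<integral>\<^sup>+v. backward_weight k x v * g v \<partial>piV)"
    using q1 k g unfolding nn_integral_backward_weight[OF k(1) g, symmetric]
    by (intro nn_integral_cmult borel_measurable_times_ennreal measurable_K_prod
      measurable_compose[OF _ g]) auto
  finally show ?thesis
    unfolding g_def cond_density_def by (simp add: mult_ac)
qed

lemma nn_integral_obs_likelihood:
  assumes k: "1 \<le> k" "k < n"
    and G: "(\<lambda>z. G (fst z) (snd z)) \<in> borel_measurable (piV \<Otimes>\<^sub>M PiV {Suc k..n})"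
  shows "(\<integral>\<^sup>+v. obs_likelihood v x * G (v k) (restrict v {Suc k..n}) \<partial>PiV {1..Suc n})
    = (\<integral>\<^sup>+b. future_marginal k b x * (\<integral>\<^sup>+u. cond_density k x (b (Suc k)) u * G u b \<partial>piV)
        \<partial>PiV {Suc k..n})"
proof -
  define S where "S = {Suc k..n}"
  define I where "I = {Suc k..Suc n}"
  define J where "J = {1..k}"
  define \<Phi> where "\<Phi> c = (\<integral>\<^sup>+u. cond_density k x (c (Suc k)) u * G u c \<partial>piV)" for c
  have IJ: "I \<inter> J = {}" "finite I" "finite J" "{1..Suc n} = I \<union> J"
    unfolding I_def J_def using k by auto
  have "(\<lambda>v. (v k, restrict v S)) \<in> PiV (I \<union> J) \<rightarrow>\<^sub>M piV \<Otimes>\<^sub>M PiV S"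
    using k by (intro measurable_Pair measurable_restrict_subset) (auto simp: I_def J_def S_def)
  from measurable_compose[OF this G[folded S_def]]
  have "(\<lambda>v. obs_likelihood v x * G (v k) (restrict v S)) \<in> borel_measurable (PiV (I \<union> J))"
    unfolding obs_likelihood_def using q1 k
    by (intro borel_measurable_times_ennreal measurable_K_prod) (auto simp: I_def J_def)
  then have "(\<integral>\<^sup>+v. obs_likelihood v x * G (v k) (restrict v S) \<partial>PiV {1..Suc n})
      = (\<integral>\<^sup>+b. (\<integral>\<^sup>+a. obs_likelihood (merge I J (b, a)) x * G (merge I J (b, a) k)
          (restrict (merge I J (b, a)) S) \<partial>PiV J) \<partial>PiV I)"
    unfolding IJ(4) by (rule PV.product_nn_integral_fold[OF IJ(1-3)])
  also have "\<dots> = (\<integral>\<^sup>+b. future_likelihood k b x * \<Phi> (restrict b S) \<partial>PiV I)"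
  proof (rule nn_integral_cong)
    fix b assume b: "b \<in> space (PiV I)"
    then have "restrict b S \<in> space (PiV S)"
      by (auto simp: space_PiM S_def I_def)
    from measurable_compose[OF measurable_Pair2'[OF this] G[folded S_def]]
    have H: "(\<lambda>v. G v (restrict b S)) \<in> borel_measurable piV"
      by simp
    have "restrict (merge I J (b, a)) S = restrict b S" "merge I J (b, a) k = a k" for a
      using IJ k by (auto simp: merge_def restrict_def fun_eq_iff S_def I_def J_def)
    moreover have "restrict b S (Suc k) = b (Suc k)"
      using k by (simp add: S_def)
    ultimately show "(\<integral>\<^sup>+a. obs_likelihood (merge I J (b, a)) x * G (merge I J (b, a) k)
        (restrict (merge I J (b, a)) S) \<partial>PiV J) = future_likelihood k b x * \<Phi> (restrict b S)"
      using nn_integral_obs_likelihood_past[OF k b[unfolded I_def] H] unfolding \<Phi>_def I_def J_def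
      by simp
  qed
  also have "\<dots> = (\<integral>\<^sup>+b. future_marginal k b x * \<Phi> b \<partial>PiV S)"
    unfolding I_def S_def \<Phi>_def
    by (rule nn_integral_future_likelihood[OF k(2) measurable_cond_integral[OF k(2) G]])
  finally show ?thesis
    unfolding S_def \<Phi>_def .
qed

abbreviation law :: "((nat \<Rightarrow> 'v) \<times> (nat \<Rightarrow> 'x)) measure" where
  "law \<equiv> joint_law n piV K"

abbreviation tail_space :: "nat \<Rightarrow> ((nat \<Rightarrow> 'v) \<times> (nat \<Rightarrow> 'x)) measure" where
  "tail_space k \<equiv> PiV {Suc k..n} \<Otimes>\<^sub>M PiX {q..n}"

definition tail_obs :: "nat \<Rightarrow> (nat \<Rightarrow> 'v) \<times> (nat \<Rightarrow> 'x) \<Rightarrow> (nat \<Rightarrow> 'v) \<times> (nat \<Rightarrow> 'x)" where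
  "tail_obs k \<omega> = (restrict (fst \<omega>) {Suc k..n}, Xobs q n \<omega>)"

definition joint_density :: "(nat \<Rightarrow> 'v) \<times> (nat \<Rightarrow> 'x) \<Rightarrow> ennreal" where
  "joint_density = (\<lambda>(v, x). ennreal (\<Prod>i=1..n. K i (x i) (v i) (v (Suc i))))"

lemma law_eq_density: "law = density (PiV {1..n+1} \<Otimes>\<^sub>M PiX {1..n}) joint_density"
  unfolding joint_law_def joint_density_def by simp

lemma sets_law: "sets law = sets (PiV {1..n+1} \<Otimes>\<^sub>M PiX {1..n})"
  unfolding law_eq_density by simp

lemma space_law: "space law = space (PiV {1..n+1} \<Otimes>\<^sub>M PiX {1..n})"
  unfolding law_eq_density by simp

lemma joint_density_eq_prod:
  "v \<in> space (PiV {1..n+1}) \<Longrightarrow> joint_density (v, x) = (\<Prod>i=1..n. ennreal (K i (x i) (v i) (v (Suc i))))"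
  unfolding joint_density_def by (auto simp: space_PiM intro!: prod_ennreal[symmetric] K_nonneg)

lemma measurable_joint_density: "joint_density \<in> borel_measurable (PiV {1..n+1} \<Otimes>\<^sub>M PiX {1..n})"
proof -
  have "(\<lambda>z. (\<lambda>v x. ennreal (\<Prod>i=1..n. K i (x i) (v i) (v (Suc i)))) (fst z) (snd z))
      \<in> borel_measurable (PiV {1..n+1} \<Otimes>\<^sub>M PiX {1..n})"
    by (rule measurable_pair_PiM_count_space)
      (auto intro!: measurable_compose[OF _ measurable_ennreal] borel_measurable_prod measurable_K)
  then show ?thesis
    unfolding joint_density_def by (simp add: case_prod_beta')
qed

lemma nn_integral_K_prod:
  assumes I: "finite I" "I \<subseteq> {1..n}" and v: "v \<in> space (PiV {1..n+1})"
  shows "(\<integral>\<^sup>+x. (\<Prod>i\<in>I. ennreal (K i (x i) (v i) (v (Suc i)))) \<partial>PiX I) = 1"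
proof -
  have v_space: "v i \<in> space piV" if "i \<in> {1..n+1}" for i
    using v that by (auto simp: space_PiM)
  have "v i \<in> space piV \<and> v (Suc i) \<in> space piV" if "i \<in> I" for i
    using that I(2) by (intro conjI v_space) auto
  then show ?thesis
    using I by (subst PX.product_nn_integral_prod) (auto intro!: prod.neutral nn_integral_K)
qed

lemma prob_space_law: "prob_space law"
proof (rule prob_spaceI)
  let ?P = "PiV {1..n+1}" and ?C = "PiX {1..n}"
  interpret C: sigma_finite_measure ?C
    by (rule sigma_finite_PiX) simp
  have "emeasure law (space law) = (\<integral>\<^sup>+\<omega>. joint_density \<omega> * 1 \<partial>(?P \<Otimes>\<^sub>M ?C))"
    unfolding law_eq_density using measurable_joint_density by (simp add: emeasure_density)
  also have "\<dots> = (\<integral>\<^sup>+v. (\<integral>\<^sup>+x. joint_density (v, x) \<partial>?C) \<partial>?P)"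
    by (subst C.nn_integral_fst[symmetric]) (use measurable_joint_density in auto)
  also have "\<dots> = (\<integral>\<^sup>+v. 1 \<partial>?P)"
    by (intro nn_integral_cong) (simp add: joint_density_eq_prod nn_integral_K_prod)
  finally show "emeasure law (space law) = 1"
    using prob_space.emeasure_space_1[OF prob_space_PiV] by simp
qed

lemma measurable_tail_obs: "tail_obs k \<in> PiV {1..n+1} \<Otimes>\<^sub>M PiX {1..n} \<rightarrow>\<^sub>M tail_space k"
  unfolding tail_obs_def Xobs_def using q1
  by (intro measurable_Pair measurable_compose[OF measurable_fst measurable_restrict_subset]
      measurable_compose[OF measurable_snd measurable_restrict_subset]) auto

lemma nn_integral_joint_density_obs:
  assumes v: "v \<in> space (PiV {1..n+1})"
  shows "(\<integral>\<^sup>+x. joint_density (v, x) * F (restrict x {q..n}) \<partial>PiX {1..n})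
    = (\<integral>\<^sup>+x. obs_likelihood v x * F x \<partial>PiX {q..n})"
proof -
  define I where "I = {1..<q}"
  define Q where "Q = {q..n}"
  have IQ: "I \<inter> Q = {}" "finite I" "finite Q" "{1..n} = I \<union> Q"
    unfolding I_def Q_def using q1 qn by auto
  have Q_not_I: "i \<notin> I" if "i \<in> Q" for i
    using that IQ(1) by auto
  let ?L = "\<lambda>x. \<Prod>i\<in>I. ennreal (K i (x i) (v i) (v (Suc i)))"
  have "(\<integral>\<^sup>+x. joint_density (v, x) * F (restrict x Q) \<partial>PiX {1..n})
      = (\<integral>\<^sup>+y. (\<integral>\<^sup>+z. joint_density (v, merge I Q (y, z)) * F (restrict (merge I Q (y, z)) Q) \<partial>PiX Q)
          \<partial>PiX I)"
    unfolding IQ(4) by (rule PX.product_nn_integral_fold[OF IQ(1-3)]) (simp add: PiM_count_space_UNIV IQ)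
  also have "\<dots> = (\<integral>\<^sup>+y. (\<integral>\<^sup>+z. ?L y * (obs_likelihood v z * F z) \<partial>PiX Q) \<partial>PiX I)"
  proof (intro nn_integral_cong)
    fix y z assume "z \<in> space (PiX Q)"
    then have "restrict (merge I Q (y, z)) Q = z"
      using IQ by (auto simp: space_PiM restrict_def fun_eq_iff PiE_def extensional_def)
    moreover have "joint_density (v, merge I Q (y, z)) = ?L y * obs_likelihood v z"
      unfolding joint_density_eq_prod[OF v] obs_likelihood_def IQ(4) Q_def[symmetric]
      using IQ Q_not_I by (simp add: prod.union_disjoint merge_def cong: prod.cong)
    ultimately show "joint_density (v, merge I Q (y, z)) * F (restrict (merge I Q (y, z)) Q)
        = ?L y * (obs_likelihood v z * F z)"
      by (simp add: mult_ac)
  qed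
  also have "\<dots> = (\<integral>\<^sup>+y. ?L y \<partial>PiX I) * (\<integral>\<^sup>+z. obs_likelihood v z * F z \<partial>PiX Q)"
    using IQ by (simp add: PiM_count_space_UNIV nn_integral_cmult nn_integral_multc)
  also have "(\<integral>\<^sup>+y. ?L y \<partial>PiX I) = 1"
    using v IQ qn by (intro nn_integral_K_prod) (auto simp: I_def)
  finally show ?thesis
    unfolding Q_def by (simp only: mult_1)
qed

lemma tail_obs_eq: "tail_obs k \<omega> = (restrict (fst \<omega>) {Suc k..n}, restrict (snd \<omega>) {q..n})"
  unfolding tail_obs_def Xobs_def ..

lemma measurable_disintegration_integrand:
  assumes k: "k < n" and G: "(\<lambda>z. G (fst z) (snd z)) \<in> borel_measurable (piV \<Otimes>\<^sub>M tail_space k)"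
  shows "(\<lambda>t. future_marginal k (fst t) (snd t) * (\<integral>\<^sup>+u. cond_density k (snd t) (fst t (Suc k)) u * G u t \<partial>piV))
    \<in> borel_measurable (tail_space k)"
proof -
  have "(\<lambda>z. (\<lambda>b x. future_marginal k b x * (\<integral>\<^sup>+u. cond_density k x (b (Suc k)) u * G u (b, x) \<partial>piV))
      (fst z) (snd z)) \<in> borel_measurable (tail_space k)"
  proof (rule measurable_pair_PiM_count_space)
    fix x :: "nat \<Rightarrow> 'x" assume "x \<in> PiE {q..n} (\<lambda>_. UNIV)"
    then have "(\<lambda>z. (fst z, (snd z, x))) \<in> piV \<Otimes>\<^sub>M PiV {Suc k..n} \<rightarrow>\<^sub>M piV \<Otimes>\<^sub>M tail_space k"
      by (simp add: space_PiM)
    from measurable_compose[OF this G]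
    have "(\<lambda>z. G (fst z) (snd z, x)) \<in> borel_measurable (piV \<Otimes>\<^sub>M PiV {Suc k..n})"
      by simp
    with measurable_future_marginal[OF k] measurable_cond_integral[OF k this]
    show "(\<lambda>b. future_marginal k b x * (\<integral>\<^sup>+u. cond_density k x (b (Suc k)) u * G u (b, x) \<partial>piV))
        \<in> borel_measurable (PiV {Suc k..n})"
      by (intro borel_measurable_times_ennreal)
  qed simp
  then show ?thesis
    by simp
qed

lemma measurable_tail_test:
  assumes k: "1 \<le> k" "k < n" and G: "(\<lambda>z. G (fst z) (snd z)) \<in> borel_measurable (piV \<Otimes>\<^sub>M tail_space k)"
  shows "(\<lambda>\<omega>. G (fst \<omega> k) (tail_obs k \<omega>)) \<in> borel_measurable (PiV {1..n+1} \<Otimes>\<^sub>M PiX {1..n})"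
proof -
  have "(\<lambda>\<omega>. (fst \<omega> k, tail_obs k \<omega>)) \<in> PiV {1..n+1} \<Otimes>\<^sub>M PiX {1..n} \<rightarrow>\<^sub>M piV \<Otimes>\<^sub>M tail_space k"
    using k by (intro measurable_Pair measurable_tail_obs) auto
  from measurable_compose[OF this G] show ?thesis
    by simp
qed

lemma measurable_obs_likelihood_test:
  assumes k: "1 \<le> k" "k < n" and G: "(\<lambda>z. G (fst z) (snd z)) \<in> borel_measurable (piV \<Otimes>\<^sub>M tail_space k)"
  shows "(\<lambda>(v, x). obs_likelihood v x * G (v k) (restrict v {Suc k..n}, x))
    \<in> borel_measurable (PiV {1..n+1} \<Otimes>\<^sub>M PiX {q..n})"
proof -
  have "(\<lambda>z. (fst z k, (restrict (fst z) {Suc k..n}, snd z)))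
      \<in> PiV {1..n+1} \<Otimes>\<^sub>M PiX {q..n} \<rightarrow>\<^sub>M piV \<Otimes>\<^sub>M tail_space k"
    using k by (intro measurable_Pair measurable_compose[OF measurable_fst measurable_restrict_subset]) auto
  from measurable_compose[OF this G]
  have "(\<lambda>z. G (fst z k) (restrict (fst z) {Suc k..n}, snd z)) \<in> borel_measurable (PiV {1..n+1} \<Otimes>\<^sub>M PiX {q..n})"
    by simp
  moreover have "(\<lambda>z. obs_likelihood (fst z) (snd z)) \<in> borel_measurable (PiV {1..n+1} \<Otimes>\<^sub>M PiX {q..n})"
    unfolding obs_likelihood_def using q1 by (intro measurable_pair_PiM_count_space measurable_K_prod) auto
  ultimately show ?thesis
    unfolding case_prod_beta' by (intro borel_measurable_times_ennreal)
qed

text \<open>The joint law disintegrated along \<open>(V\<^sub>k, V\<^sub>k\<^sub>+\<^sub>1\<^sub>:\<^sub>n, X\<^sub>q\<^sub>:\<^sub>n)\<close>: given the tail \<open>t\<close>, the coordinate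
  \<open>V\<^sub>k\<close> has density \<open>cond_density\<close> with respect to \<open>piV\<close>.\<close>

lemma nn_integral_law_disintegration:
  assumes k: "1 \<le> k" "k < n" and G: "(\<lambda>z. G (fst z) (snd z)) \<in> borel_measurable (piV \<Otimes>\<^sub>M tail_space k)"
  shows "(\<integral>\<^sup>+\<omega>. G (fst \<omega> k) (tail_obs k \<omega>) \<partial>law)
    = (\<integral>\<^sup>+t. future_marginal k (fst t) (snd t) * (\<integral>\<^sup>+u. cond_density k (snd t) (fst t (Suc k)) u * G u t \<partial>piV)
        \<partial>tail_space k)"
proof -
  define S where "S = {Suc k..n}"
  define Q where "Q = {q..n}"
  let ?P = "PiV {1..n+1}" and ?C = "PiX {1..n}"
  interpret C: sigma_finite_measure ?C
    by (rule sigma_finite_PiX) simp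
  interpret PQ: pair_sigma_finite ?P "PiX Q"
    by (intro pair_sigma_finite.intro prob_space_imp_sigma_finite prob_space_PiV sigma_finite_PiX)
      (simp add: Q_def)
  interpret SQ: pair_sigma_finite "PiV S" "PiX Q"
    by (intro pair_sigma_finite.intro prob_space_imp_sigma_finite prob_space_PiV sigma_finite_PiX)
      (simp add: Q_def)
  note G_tail = measurable_tail_test[OF k G]
  note integrand = measurable_obs_likelihood_test[OF k G, folded S_def Q_def]
  have "(\<integral>\<^sup>+\<omega>. G (fst \<omega> k) (tail_obs k \<omega>) \<partial>law)
      = (\<integral>\<^sup>+\<omega>. joint_density \<omega> * G (fst \<omega> k) (tail_obs k \<omega>) \<partial>(?P \<Otimes>\<^sub>M ?C))"
    unfolding law_eq_density by (rule nn_integral_density[OF measurable_joint_density G_tail])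
  also have "\<dots> = (\<integral>\<^sup>+v. (\<integral>\<^sup>+x. joint_density (v, x) * G (v k) (restrict v S, restrict x Q) \<partial>?C) \<partial>?P)"
    by (subst C.nn_integral_fst[symmetric])
      (use measurable_joint_density G_tail in \<open>auto simp: tail_obs_eq S_def Q_def\<close>)
  also have "\<dots> = (\<integral>\<^sup>+v. (\<integral>\<^sup>+x. obs_likelihood v x * G (v k) (restrict v S, x) \<partial>PiX Q) \<partial>?P)"
    unfolding Q_def by (intro nn_integral_cong nn_integral_joint_density_obs)
  also have "\<dots> = (\<integral>\<^sup>+x. (\<integral>\<^sup>+v. obs_likelihood v x * G (v k) (restrict v S, x) \<partial>?P) \<partial>PiX Q)"
    by (rule PQ.Fubini'[OF integrand, symmetric])
  also have "\<dots> = (\<integral>\<^sup>+x. (\<integral>\<^sup>+b. future_marginal k b x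
      * (\<integral>\<^sup>+u. cond_density k x (b (Suc k)) u * G u (b, x) \<partial>piV) \<partial>PiV S) \<partial>PiX Q)"
  proof (rule nn_integral_cong)
    fix x assume "x \<in> space (PiX Q)"
    then have "(\<lambda>z. (fst z, (snd z, x))) \<in> piV \<Otimes>\<^sub>M PiV S \<rightarrow>\<^sub>M piV \<Otimes>\<^sub>M tail_space k"
      by (simp add: S_def Q_def)
    from measurable_compose[OF this G]
    have "(\<lambda>z. G (fst z) (snd z, x)) \<in> borel_measurable (piV \<Otimes>\<^sub>M PiV {Suc k..n})"
      by (simp add: S_def)
    from nn_integral_obs_likelihood[OF k this, of x]
    show "(\<integral>\<^sup>+v. obs_likelihood v x * G (v k) (restrict v S, x) \<partial>?P)
        = (\<integral>\<^sup>+b. future_marginal k b x * (\<integral>\<^sup>+u. cond_density k x (b (Suc k)) u * G u (b, x) \<partial>piV) \<partial>PiV S)"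
      by (simp only: S_def Suc_eq_plus1)
  qed
  also have "\<dots> = (\<integral>\<^sup>+t. future_marginal k (fst t) (snd t)
      * (\<integral>\<^sup>+u. cond_density k (snd t) (fst t (Suc k)) u * G u t \<partial>piV) \<partial>(PiV S \<Otimes>\<^sub>M PiX Q))"
    using SQ.nn_integral_snd[OF measurable_disintegration_integrand[OF k(2) G, folded S_def Q_def]]
    by simp
  finally show ?thesis
    unfolding S_def Q_def .
qed

definition tail_kernel_prob :: "nat \<Rightarrow> 'v set \<Rightarrow> (nat \<Rightarrow> 'v) \<times> (nat \<Rightarrow> 'x) \<Rightarrow> real" where
  "tail_kernel_prob k A t = measure (cond_kernel k (snd t) (fst t (Suc k))) A"

lemma measurable_tail_kernel_prob:
  assumes k: "k < n" and A: "A \<in> sets piV"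
  shows "tail_kernel_prob k A \<in> borel_measurable (tail_space k)"
proof -
  have "(\<lambda>z. (\<lambda>b x. measure (cond_kernel k x (b (Suc k))) A) (fst z) (snd z)) \<in> borel_measurable (tail_space k)"
    using k by (intro measurable_pair_PiM_count_space measurable_compose[OF _ measurable_cond_kernel[OF A]])
      auto
  then show ?thesis
    unfolding tail_kernel_prob_def[abs_def] by simp
qed

lemma nn_integral_law_tail_kernel_prob:
  assumes k: "1 \<le> k" "k < n" and A: "A \<in> sets piV" and B: "B \<in> sets (tail_space k)"
  shows "(\<integral>\<^sup>+\<omega>. indicator B (tail_obs k \<omega>) * indicator A (fst \<omega> k) \<partial>law)
    = (\<integral>\<^sup>+\<omega>. indicator B (tail_obs k \<omega>) * ennreal (tail_kernel_prob k A (tail_obs k \<omega>)) \<partial>law)"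
proof -
  let ?G1 = "\<lambda>u t. indicator B t * (indicator A u :: ennreal)"
  let ?G2 = "\<lambda>u :: 'v. \<lambda>t. indicator B t * ennreal (tail_kernel_prob k A t)"
  have G1: "(\<lambda>z. ?G1 (fst z) (snd z)) \<in> borel_measurable (piV \<Otimes>\<^sub>M tail_space k)"
    using A B by measurable
  have G2: "(\<lambda>z. ?G2 (fst z) (snd z)) \<in> borel_measurable (piV \<Otimes>\<^sub>M tail_space k)"
    using B measurable_compose[OF measurable_snd measurable_tail_kernel_prob[OF k(2) A]] by measurable
  have "(\<integral>\<^sup>+u. cond_density k (snd t) (fst t (Suc k)) u * ?G1 u t \<partial>piV)
      = (\<integral>\<^sup>+u. cond_density k (snd t) (fst t (Suc k)) u * ?G2 u t \<partial>piV)" if t: "t \<in> space (tail_space k)" for t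
  proof -
    define w where "w = fst t (Suc k)"
    define x where "x = snd t"
    have w: "w \<in> space piV"
      using t k unfolding w_def by (auto simp: space_pair_measure space_PiM)
    have "(\<integral>\<^sup>+u. cond_density k x w u * ?G1 u t \<partial>piV)
        = indicator B t * (\<integral>\<^sup>+u. cond_density k x w u * indicator A u \<partial>piV)"
      using measurable_cond_density[OF w] A
      by (subst nn_integral_cmult[symmetric]) (auto intro!: nn_integral_cong simp: mult_ac)
    also have "\<dots> = (\<integral>\<^sup>+u. cond_density k x w u \<partial>piV) * (indicator B t * ennreal (tail_kernel_prob k A t))"
      unfolding nn_integral_cond_density_indicator[OF w A] cond_normaliser_def
      by (simp add: tail_kernel_prob_def w_def x_def mult_ac)
    also have "\<dots> = (\<integral>\<^sup>+u. cond_density k x w u * ?G2 u t \<partial>piV)"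
      by (rule nn_integral_multc[OF measurable_cond_density[OF w], symmetric])
    finally show ?thesis
      unfolding w_def x_def .
  qed
  then show ?thesis
    unfolding nn_integral_law_disintegration[OF k G1] nn_integral_law_disintegration[OF k G2]
    by (intro nn_integral_cong) simp
qed

text \<open>Both \<sigma>-algebras of the statement are generated by a measurable function \<open>p\<close> of
  \<open>tail_obs k\<close> through which the kernel probability factors.\<close>

lemma cond_prob_eq_tail_kernel_prob:
  assumes k: "1 \<le> k" "k < n" and A: "A \<in> sets piV"
    and p: "p \<in> tail_space k \<rightarrow>\<^sub>M Y" and g: "g \<in> borel_measurable Y"
    and g_bounds: "\<And>y. y \<in> space Y \<Longrightarrow> 0 \<le> g y \<and> g y \<le> 1"
    and gp: "\<And>t. t \<in> space (tail_space k) \<Longrightarrow> g (p t) = tail_kernel_prob k A t"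
  shows "AE \<omega> in law. condP_V law (vimage_algebra (space law) (\<lambda>\<omega>. p (tail_obs k \<omega>)) Y) k A \<omega>
    = tail_kernel_prob k A (tail_obs k \<omega>)"
proof -
  let ?E = "{\<omega> \<in> space law. fst \<omega> k \<in> A}"
  have tail: "tail_obs k \<in> law \<rightarrow>\<^sub>M tail_space k"
    unfolding measurable_cong_sets[OF sets_law refl] by (rule measurable_tail_obs)
  have tail_space: "tail_obs k \<omega> \<in> space (tail_space k)" if "\<omega> \<in> space law" for \<omega>
    using measurable_space[OF tail that] .
  have T: "(\<lambda>\<omega>. p (tail_obs k \<omega>)) \<in> law \<rightarrow>\<^sub>M Y"
    by (rule measurable_compose[OF tail p])
  have "(\<lambda>\<omega>. fst \<omega> k) \<in> law \<rightarrow>\<^sub>M piV"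
    unfolding measurable_cong_sets[OF sets_law refl] using k by simp
  from measurable_sets[OF this A] have E: "?E \<in> sets law"
    by (simp add: vimage_def Int_def conj_commute)
  have "AE \<omega> in law. condP_V law (vimage_algebra (space law) (\<lambda>\<omega>. p (tail_obs k \<omega>)) Y) k A \<omega>
      = g (p (tail_obs k \<omega>))"
    unfolding condP_V_def
  proof (rule real_cond_exp_vimage_indicator[OF prob_space_law T g g_bounds E])
    fix B assume "B \<in> sets Y"
    then have B': "p -` B \<inter> space (tail_space k) \<in> sets (tail_space k)"
      using measurable_sets[OF p] by blast
    have "(\<integral>\<^sup>+\<omega>. indicator B (p (tail_obs k \<omega>)) * indicator ?E \<omega> \<partial>law)
        = (\<integral>\<^sup>+\<omega>. indicator (p -` B \<inter> space (tail_space k)) (tail_obs k \<omega>) * indicator A (fst \<omega> k) \<partial>law)"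
      by (intro nn_integral_cong) (auto simp: indicator_def tail_space)
    also have "\<dots> = (\<integral>\<^sup>+\<omega>. indicator (p -` B \<inter> space (tail_space k)) (tail_obs k \<omega>)
        * ennreal (tail_kernel_prob k A (tail_obs k \<omega>)) \<partial>law)"
      by (rule nn_integral_law_tail_kernel_prob[OF k A B'])
    also have "\<dots> = (\<integral>\<^sup>+\<omega>. indicator B (p (tail_obs k \<omega>)) * ennreal (g (p (tail_obs k \<omega>))) \<partial>law)"
      by (intro nn_integral_cong) (auto simp: indicator_def tail_space gp)
    finally show "(\<integral>\<^sup>+\<omega>. indicator B (p (tail_obs k \<omega>)) * indicator ?E \<omega> \<partial>law)
        = (\<integral>\<^sup>+\<omega>. indicator B (p (tail_obs k \<omega>)) * ennreal (g (p (tail_obs k \<omega>))) \<partial>law)" .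
  qed
  with AE_space show ?thesis
    by eventually_elim (simp add: gp tail_space)
qed

lemma cond_prob_eq_cond_kernel:
  assumes k: "1 \<le> k" "k < n" and A: "A \<in> sets piV"
  shows "AE \<omega> in law.
    condP_V law (sig_Vtail_X n piV law k q) k A \<omega> = measure (cond_kernel k (Xobs q n \<omega>) (fst \<omega> (Suc k))) A \<and>
    condP_V law (sig_V1_X n piV law k q) k A \<omega> = measure (cond_kernel k (Xobs q n \<omega>) (fst \<omega> (Suc k))) A"
proof -
  have prob_bounds: "0 \<le> measure (cond_kernel k x w) A \<and> measure (cond_kernel k x w) A \<le> 1" for x w
    using prob_space.prob_le_1[OF prob_space_cond_kernel] by simp
  have "AE \<omega> in law. condP_V law (vimage_algebra (space law) (\<lambda>\<omega>. tail_obs k \<omega>) (tail_space k)) k A \<omega>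
      = tail_kernel_prob k A (tail_obs k \<omega>)"
    using prob_bounds by (intro cond_prob_eq_tail_kernel_prob[OF k A measurable_ident_sets
      measurable_tail_kernel_prob[OF k(2) A]]) (auto simp: tail_kernel_prob_def)
  then have tail: "AE \<omega> in law. condP_V law (sig_Vtail_X n piV law k q) k A \<omega>
      = tail_kernel_prob k A (tail_obs k \<omega>)"
    unfolding sig_Vtail_X_def tail_obs_def .
  have "AE \<omega> in law. condP_V law (vimage_algebra (space law)
        (\<lambda>\<omega>. (fst (tail_obs k \<omega>) (Suc k), snd (tail_obs k \<omega>))) (piV \<Otimes>\<^sub>M PiX {q..n})) k A \<omega>
      = tail_kernel_prob k A (tail_obs k \<omega>)"
  proof (rule cond_prob_eq_tail_kernel_prob[OF k A, where p="\<lambda>t. (fst t (Suc k), snd t)"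
        and g="\<lambda>y. measure (cond_kernel k (snd y) (fst y)) A"])
    show "(\<lambda>t. (fst t (Suc k), snd t)) \<in> tail_space k \<rightarrow>\<^sub>M piV \<Otimes>\<^sub>M PiX {q..n}"
      using k by simp
    show "(\<lambda>y. measure (cond_kernel k (snd y) (fst y)) A) \<in> borel_measurable (piV \<Otimes>\<^sub>M PiX {q..n})"
      using measurable_pair_PiM_count_space[of "{q..n}" "\<lambda>w x. measure (cond_kernel k x w) A"]
        measurable_cond_kernel[OF A] by simp
  qed (use prob_bounds in \<open>auto simp: tail_kernel_prob_def\<close>)
  moreover have "(\<lambda>\<omega>. (fst (tail_obs k \<omega>) (Suc k), snd (tail_obs k \<omega>))) = (\<lambda>\<omega>. (fst \<omega> (Suc k), Xobs q n \<omega>))"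
    using k by (auto simp: tail_obs_def)
  ultimately have current: "AE \<omega> in law. condP_V law (sig_V1_X n piV law k q) k A \<omega>
      = tail_kernel_prob k A (tail_obs k \<omega>)"
    unfolding sig_V1_X_def by simp
  from tail current show ?thesis
    by eventually_elim (use k in \<open>simp add: tail_kernel_prob_def tail_obs_def\<close>)
qed

end

theorem lemma4:
  fixes n q :: nat and piV :: "'v measure"
    and K :: "nat \<Rightarrow> 'x::countable \<Rightarrow> 'v \<Rightarrow> 'v \<Rightarrow> real" and \<nu> :: "nat \<Rightarrow> real"
  assumes n: "1 \<le> n"
    and piV: "prob_space piV"
    and K_meas: "\<forall>i\<ge>1. \<forall>x. (\<lambda>(v, w). K i x v w) \<in> borel_measurable (piV \<Otimes>\<^sub>M piV)"
    and K_distr: "\<forall>i\<ge>1. \<forall>v\<in>space piV. \<forall>w\<in>space piV. ((\<lambda>x. K i x v w) has_sum 1) UNIV"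
    and H2_pos: "\<forall>i\<ge>1. 0 < \<nu> i"
    and H2: "\<forall>i\<ge>1. \<forall>x. \<forall>v\<in>space piV. \<forall>w\<in>space piV. \<nu> i \<le> K i x v w \<and> K i x v w \<le> 1"
    and q: "1 \<le> q" "q \<le> n"
  shows "\<exists>Kc :: nat \<Rightarrow> (nat \<Rightarrow> 'x) \<Rightarrow> 'v \<Rightarrow> 'v measure.
     (\<forall>k x w. prob_space (Kc k x w) \<and> sets (Kc k x w) = sets piV) \<and>
     (\<forall>k x A. A \<in> sets piV \<longrightarrow> (\<lambda>w. measure (Kc k x w) A) \<in> borel_measurable piV) \<and>
     (\<forall>k\<in>{1..<n}. \<forall>A\<in>sets piV. AE \<omega> in joint_law n piV K.
         condP_V (joint_law n piV K) (sig_Vtail_X n piV (joint_law n piV K) k q) k A \<omega>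
           = measure (Kc k (Xobs q n \<omega>) (fst \<omega> (Suc k))) A \<and>
         condP_V (joint_law n piV K) (sig_V1_X n piV (joint_law n piV K) k q) k A \<omega>
           = measure (Kc k (Xobs q n \<omega>) (fst \<omega> (Suc k))) A) \<and>
     (\<forall>k\<in>{q..<n}. \<exists>\<mu> :: (nat \<Rightarrow> 'x) \<Rightarrow> 'v measure.
         (\<forall>x. prob_space (\<mu> x) \<and> sets (\<mu> x) = sets piV) \<and>
         (\<forall>A\<in>sets piV. AE \<omega> in joint_law n piV K.
            measure (Kc k (Xobs q n \<omega>) (fst \<omega> (Suc k))) A \<ge> \<nu> k * measure (\<mu> (Xobs q n \<omega>)) A)) \<and>
     (\<forall>k\<in>{1..<q}. \<forall>A\<in>sets piV. AE \<omega> in joint_law n piV K.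
         measure (Kc k (Xobs q n \<omega>) (fst \<omega> (Suc k))) A = measure piV A)"
proof -
  interpret hmm_model n q piV K \<nu>
    by (rule hmm_model.intro) (use assms in auto)
  have V_space: "fst \<omega> (Suc k) \<in> space piV" if "\<omega> \<in> space (joint_law n piV K)" "k < n" for \<omega> k
    using that by (auto simp: space_law space_pair_measure space_PiM)
  show ?thesis
    apply (intro exI[of _ cond_kernel] conjI allI ballI impI)
    subgoal by (rule prob_space_cond_kernel)
    subgoal by (rule sets_cond_kernel)
    subgoal by (rule measurable_cond_kernel)
    subgoal by (intro cond_prob_eq_cond_kernel) auto
    subgoal for k
      using V_space prob_space_minorising_measure
      by (intro exI[of _ "minorising_measure k"] conjI allI ballI AE_I2 measure_cond_kernel_ge_minorising)
        auto
    subgoal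
      using V_space q by (intro AE_I2 measure_cond_kernel_below_q) auto
    done
qed

end
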